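(* Let $n\in\mathbb{N}^*$, $\mu>0$, $\lambda>0$. Let $Y^s$ have the gamma law with density $\frac{\mu^n}{(n-1)!}t^{n-1}e^{-\mu t}$ on $(0,\infty)$, let $Y^d$ have the exponential law with parameter $\lambda$, and let $(C_i)_{i\ge1}$ be i.i.d. copies of a random variable $C$ with $\mathbb{P}(C>0)=1$ and $\mathbb{E}[C^2]<\infty$, with $Y^s$, $Y^d$, $(C_i)$ mutually independent. Let $L(s)=\mathbb{E}[e^{-sC}]$, $D_0=0$, $D_k=C_1+\dots+C_k$, $\overline{B}(t)=\inf\{k\ge1:D_k\ge t\}$, $K^r=\overline{B}(Y^s)$, $V^s=D_{K^r}$, $Z^d=Y^s+Y^d$, $P_d=\mathbb{P}(V^s\ge Z^d)$. Then $$\mathbb{E}[K^r]=\sum_{i=0}^{n-1}\frac{\mu^i}{i!}(-1)^i\Big(\frac{1}{1-L}\Big)^{(i)}(\mu),$$ and $$1-P_d=\begin{cases}\dfrac{\mu^n}{(\mu-\lambda)^n}\Big(L(\lambda)-(1-L(\lambda))\displaystyle\sum_{i=0}^{n-1}\frac{(\mu-\lambda)^i}{i!}(-1)^i\Big(\frac{L}{1-L}\Big)^{(i)}(\mu)\Big) & \text{if }\lambda\ne\mu,\\[2ex] (1-L(\mu))\dfrac{\mu^n}{n!}(-1)^n\Big(\dfrac{L}{1-L}\Big)^{(n)}(\mu) & \text{if }\lambda=\mu,\end{cases}$$ where $F^{(i)}$ denotes the $i$-th derivative of a function $F$.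
   Context: $Y^s$ is the time to damage, $Y^d$ the time from damage to failure, $D_k$ the time of the $k$-th inspection, $K^r$ the index of the first inspection at or after the damage, and $P_d$ the probability that the failure occurs no later than the inspection detecting the damage. *)

theory Defs
  imports "HOL-Probability.Probability"
begin

definition insp_time :: "(nat \<Rightarrow> 'a \<Rightarrow> real) \<Rightarrow> nat \<Rightarrow> 'a \<Rightarrow> real" where
  "insp_time C k \<omega> = (\<Sum>i=1..k. C i \<omega>)"

definition Bbar :: "(nat \<Rightarrow> 'a \<Rightarrow> real) \<Rightarrow> real \<Rightarrow> 'a \<Rightarrow> nat" where
  "Bbar C t \<omega> = (LEAST k. 1 \<le> k \<and> t \<le> insp_time C k \<omega>)"

end

theory Submission
  imports Defs
begin

(*
  Let H_i(s) = sum_k E[D_k^i exp(-s D_k)].  Independence gives E[exp(-s D_k)] = L(s)^k, so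
  H_0 = 1/(1 - L).  Expanding exp(-s x) in powers of c - s shows that near every s > 0 the
  function H_0 is a power series in c - s with coefficients H_j(c)/j!; hence
  (-1)^i (1/(1-L))^(i) = H_i and (-1)^i (L/(1-L))^(i) = H_i - [i = 0].

  Both formulas are then sums over the inspection index k.  Almost surely K^r counts the k
  with D_k < Y^s, and P(D_k < Y^s) is the Erlang tail sum_{i<n} mu^i/i! E[D_k^i exp(-mu D_k)].
  The damage is detected before failure iff D_k < Y^s <= D_{k+1} < Y^s + Y^d for exactly one k;
  conditioning on (D_k, C_{k+1}) and integrating the Erlang density against the exponential tail
  of Y^d turns this probability into a finite combination of E[D_k^i exp(-mu D_k)],
  E[D_{k+1}^i exp(-mu D_{k+1})] and L(lam) E[D_k^i exp(-mu D_k)], whose sums over k are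
  expressed through the H_i(mu).
*)

lemma power_div_fact_le_exp:
  fixes x :: real
  assumes "0 \<le> x"
  shows "x ^ k / fact k \<le> exp x"
proof -
  have exp: "(\<lambda>n. x ^ n /\<^sub>R fact n) sums exp x"
    by (rule exp_converges)
  have "(\<Sum>n\<in>{k}. x ^ n /\<^sub>R fact n) \<le> (\<Sum>n. x ^ n /\<^sub>R fact n)"
    by (rule sum_le_suminf) (use exp assms in \<open>auto simp: sums_iff\<close>)
  then show ?thesis
    using exp by (simp add: sums_iff divide_inverse_commute)
qed

lemma power_mult_exp_le:
  fixes x s :: real
  assumes "0 \<le> x" "0 < s"
  shows "x ^ k * exp (- s * x) \<le> fact k * (2 / s) ^ k * exp (- (s / 2) * x)"
proof -
  have "(s / 2 * x) ^ k \<le> fact k * exp (s / 2 * x)"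
    using power_div_fact_le_exp[of "s / 2 * x" k] assms by (simp add: divide_le_eq mult.commute)
  then have "(2 / s) ^ k * (s / 2 * x) ^ k \<le> (2 / s) ^ k * (fact k * exp (s / 2 * x))"
    using assms by (intro mult_left_mono) auto
  moreover have "(2 / s) ^ k * (s / 2 * x) ^ k = x ^ k"
    using assms by (simp flip: power_mult_distrib)
  ultimately have "x ^ k * exp (- s * x) \<le> fact k * (2 / s) ^ k * exp (s / 2 * x) * exp (- s * x)"
    by (intro mult_right_mono) (auto simp: ac_simps)
  also have "\<dots> = fact k * (2 / s) ^ k * exp (- (s / 2) * x)"
    by (simp add: mult.assoc flip: exp_add)
  finally show ?thesis .
qed

lemma power_mult_exp_bounded:
  fixes x s :: real
  assumes "0 \<le> x" "0 < s"
  shows "x ^ k * exp (- s * x) \<le> fact k * (2 / s) ^ k"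
proof -
  have "x ^ k * exp (- s * x) \<le> fact k * (2 / s) ^ k * exp (- (s / 2) * x)"
    by (rule power_mult_exp_le[OF assms])
  also have "\<dots> \<le> fact k * (2 / s) ^ k * 1"
    using assms by (intro mult_left_mono) auto
  finally show ?thesis by simp
qed

definition trunc_exp :: "nat \<Rightarrow> real \<Rightarrow> real \<Rightarrow> real" where
  "trunc_exp n v y = (\<Sum>i<n. (v * y) ^ i / fact i)"

lemma DERIV_trunc_exp: "(trunc_exp (Suc m) v has_real_derivative v * trunc_exp m v y) (at y)"
proof (induction m)
  case 0
  show ?case by (simp add: trunc_exp_def)
next
  case (Suc m)
  have "((\<lambda>y. v ^ Suc m / fact (Suc m) * y ^ Suc m) has_real_derivative
          v ^ Suc m / fact (Suc m) * (real (Suc m) * y ^ (Suc m - Suc 0))) (at y)"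
    by (intro DERIV_cmult DERIV_pow)
  also have "(\<lambda>y. v ^ Suc m / fact (Suc m) * y ^ Suc m) = (\<lambda>y. (v * y) ^ Suc m / fact (Suc m))"
    by (simp add: fun_eq_iff power_mult_distrib)
  also have "v ^ Suc m / fact (Suc m) * (real (Suc m) * y ^ (Suc m - Suc 0)) = v * ((v * y) ^ m / fact m)"
    by (simp add: fact_Suc power_mult_distrib)
  finally have "((\<lambda>y. (v * y) ^ Suc m / fact (Suc m)) has_real_derivative v * ((v * y) ^ m / fact m)) (at y)" .
  from DERIV_add[OF Suc this]
  show ?case
    by (simp add: trunc_exp_def distrib_left)
qed

lemma DERIV_exp_trunc_exp:
  assumes "1 \<le> n"
  shows "((\<lambda>y. exp (- v * y) * trunc_exp n v y) has_real_derivative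
           - (v ^ n * y ^ (n - 1) / fact (n - 1) * exp (- v * y))) (at y)"
proof -
  obtain m where n: "n = Suc m"
    using assms by (cases n) auto
  have "((\<lambda>y. exp (- v * y) * trunc_exp n v y) has_real_derivative
          exp (- v * y) * (- v) * trunc_exp n v y + exp (- v * y) * (v * trunc_exp m v y)) (at y)"
    unfolding n by (auto intro!: derivative_eq_intros DERIV_trunc_exp)
  moreover have "trunc_exp n v y = trunc_exp m v y + (v * y) ^ m / fact m"
    by (simp add: n trunc_exp_def)
  ultimately show ?thesis
    by (simp add: n algebra_simps power_mult_distrib)
qed

lemma higher_deriv_reflected_power_series:
  fixes b :: "nat \<Rightarrow> nat \<Rightarrow> real"
  assumes nonneg: "\<And>i j. 0 \<le> b i j"
    and summable: "\<And>i K. 0 \<le> K \<Longrightarrow> K < R \<Longrightarrow> summable (\<lambda>j. b i j * K ^ j)"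
    and diffs: "\<And>i. diffs (b i) = b (Suc i)"
    and x: "x \<in> ball c R"
  shows "(deriv ^^ i) (\<lambda>s. \<Sum>j. b 0 j * (c - s) ^ j) x = (-1) ^ i * (\<Sum>j. b i j * (c - x) ^ j)"
  using x
proof (induction i arbitrary: x)
  case 0
  then show ?case by simp
next
  case (Suc i)
  have summable_abs: "summable (\<lambda>j. b i j * y ^ j)" if "\<bar>y\<bar> < R" for i y
  proof -
    have "summable (\<lambda>j. \<bar>b i j * y ^ j\<bar>)"
      using summable[of "\<bar>y\<bar>" i] that nonneg by (simp add: abs_mult power_abs)
    then show ?thesis
      by (rule summable_rabs_cancel)
  qed
  have deriv_series: "((\<lambda>s. \<Sum>j. b i j * (c - s) ^ j) has_real_derivative
          - (\<Sum>j. b (Suc i) j * (c - x) ^ j)) (at x)" if "x \<in> ball c R" for i x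
  proof -
    define K where "K = (\<bar>c - x\<bar> + R) / 2"
    have K: "\<bar>c - x\<bar> < K" "K < R"
      using that by (auto simp: K_def dist_real_def)
    have "((\<lambda>y. \<Sum>j. b i j * y ^ j) has_real_derivative (\<Sum>j. b (Suc i) j * (c - x) ^ j)) (at (c - x))"
      using termdiffs_strong[where K=K and c="b i" and x="c - x"] K summable_abs by (simp add: diffs)
    moreover have "((\<lambda>s. c - s) has_real_derivative -1) (at x)"
      by (auto intro!: derivative_eq_intros)
    ultimately show ?thesis
      using DERIV_chain2 by fastforce
  qed
  have "\<forall>\<^sub>F y in nhds x. (deriv ^^ i) (\<lambda>s. \<Sum>j. b 0 j * (c - s) ^ j) y
          = (-1) ^ i * (\<Sum>j. b i j * (c - y) ^ j)"
    using eventually_nhds_in_open[OF open_ball Suc.prems] by eventually_elim (rule Suc.IH)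
  then have "(deriv ^^ Suc i) (\<lambda>s. \<Sum>j. b 0 j * (c - s) ^ j) x
        = deriv (\<lambda>y. (-1) ^ i * (\<Sum>j. b i j * (c - y) ^ j)) x"
    by (simp only: funpow.simps comp_def) (rule deriv_cong_ev[OF _ refl])
  also have "\<dots> = (-1) ^ i * - (\<Sum>j. b (Suc i) j * (c - x) ^ j)"
    by (intro DERIV_imp_deriv DERIV_cmult deriv_series Suc.prems)
  finally show ?case
    by simp
qed

lemma sums_power_mult_exp_shift:
  fixes x s c :: real
  shows "(\<lambda>j. x ^ (i + j) * exp (- c * x) * ((c - s) ^ j / fact j)) sums (x ^ i * exp (- s * x))"
proof -
  have "(\<lambda>j. x ^ i * exp (- c * x) * (((c - s) * x) ^ j /\<^sub>R fact j)) sums (x ^ i * exp (- c * x) * exp ((c - s) * x))"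
    by (intro sums_mult exp_converges)
  also have "(\<lambda>j. x ^ i * exp (- c * x) * (((c - s) * x) ^ j /\<^sub>R fact j))
      = (\<lambda>j. x ^ (i + j) * exp (- c * x) * ((c - s) ^ j / fact j))"
    by (simp add: fun_eq_iff power_mult_distrib power_add divide_inverse_commute)
  also have "x ^ i * exp (- c * x) * exp ((c - s) * x) = x ^ i * exp (- s * x)"
    by (simp add: mult.assoc algebra_simps flip: exp_add)
  finally show ?thesis .
qed

lemma sum_lessThan_mult_zero_power:
  fixes f :: "nat \<Rightarrow> 'a::comm_semiring_1"
  assumes "1 \<le> n"
  shows "(\<Sum>i<n. f i * 0 ^ i) = f 0"
  using assms by (cases n) (simp_all only: sum.lessThan_Suc_shift, simp)

lemma deriv_diff_const: "deriv (\<lambda>s. g s - c) = deriv (g :: real \<Rightarrow> real)"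
proof
  fix x
  have "((\<lambda>s. g s - c) has_field_derivative D) (at x) \<longleftrightarrow> (g has_field_derivative D) (at x)" for D
    using DERIV_add[of "\<lambda>s. g s - c" D x, OF _ DERIV_const[of c]]
      DERIV_diff[of g D x, OF _ DERIV_const[of c]] by auto
  then show "deriv (\<lambda>s. g s - c) x = deriv g x"
    by (simp add: deriv_def)
qed

lemma suminf_ennreal_swap:
  fixes f :: "nat \<Rightarrow> nat \<Rightarrow> ennreal"
  shows "(\<Sum>k. \<Sum>j. f k j) = (\<Sum>j. \<Sum>k. f k j)"
proof -
  have "(\<Sum>k. \<Sum>j. f k j) = (\<integral>\<^sup>+k. (\<Sum>j. f k j) \<partial>count_space UNIV)"
    by (simp add: nn_integral_count_space_nat)
  also have "\<dots> = (\<Sum>j. \<integral>\<^sup>+k. f k j \<partial>count_space UNIV)"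
    by (rule nn_integral_suminf) simp
  also have "\<dots> = (\<Sum>j. \<Sum>k. f k j)"
    by (simp add: nn_integral_count_space_nat)
  finally show ?thesis .
qed

section \<open>Integrals against the Erlang density\<close>

lemma nn_integral_FTC_Icc_nonneg:
  fixes F g :: "real \<Rightarrow> real"
  assumes "g \<in> borel_measurable borel" "a \<le> b"
    and F: "\<And>y. y \<in> {a..b} \<Longrightarrow> (F has_real_derivative g y) (at y)"
    and g: "\<And>y. y \<in> {a..b} \<Longrightarrow> 0 \<le> g y"
  shows "(\<integral>\<^sup>+y. ennreal (g y) * indicator {a..b} y \<partial>lborel) = ennreal (F b - F a)"
    and "0 \<le> F b - F a"
proof -
  show "(\<integral>\<^sup>+y. ennreal (g y) * indicator {a..b} y \<partial>lborel) = ennreal (F b - F a)"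
    by (rule nn_integral_FTC_Icc) (use assms in auto)
  have "F a \<le> F b"
    using F g by (intro DERIV_nonneg_imp_nondecreasing[OF assms(2)]) (auto intro!: exI)
  then show "0 \<le> F b - F a"
    by simp
qed

lemma DERIV_erlang_density_exp_antiderivative:
  fixes b l m y :: real
  assumes n: "1 \<le> n" and lm: "l \<noteq> m" and y: "0 \<le> y"
  shows "((\<lambda>y. - (m ^ n * exp (- l * b) / (m - l) ^ n) * (exp (- (m - l) * y) * trunc_exp n (m - l) y))
           has_real_derivative erlang_density (n - 1) m y * exp (- l * (b - y))) (at y)"
proof -
  obtain k where k: "n = Suc k"
    using n by (cases n) auto
  define v where "v = m - l"
  have v: "v \<noteq> 0"
    using lm by (simp add: v_def)
  have "((\<lambda>y. - (m ^ n * exp (- l * b) / v ^ n) * (exp (- v * y) * trunc_exp n v y)) has_real_derivative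
          - (m ^ n * exp (- l * b) / v ^ n) * - (v ^ n * y ^ (n - 1) / fact (n - 1) * exp (- v * y))) (at y)"
    by (intro DERIV_cmult DERIV_exp_trunc_exp n)
  also have "- (m ^ n * exp (- l * b) / v ^ n) * - (v ^ n * y ^ (n - 1) / fact (n - 1) * exp (- v * y))
      = m ^ n * y ^ k / fact k * (exp (- l * b) * exp (- v * y))"
    using v by (simp add: k)
  also have "exp (- l * b) * exp (- v * y) = exp (- m * y) * exp (- l * (b - y))"
    by (simp add: v_def algebra_simps flip: exp_add)
  also have "m ^ n * y ^ k / fact k * (exp (- m * y) * exp (- l * (b - y)))
      = erlang_density (n - 1) m y * exp (- l * (b - y))"
    using y by (simp add: k erlang_density_def)
  finally show ?thesis
    by (simp add: v_def)
qed

lemma nn_integral_erlang_density_exp: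
  fixes a b l m :: real and n :: nat
  defines "X \<equiv> m ^ n / (m - l) ^ n * (\<Sum>i<n. (m - l) ^ i / fact i *
             (exp (- l * (b - a)) * (a ^ i * exp (- m * a)) - b ^ i * exp (- m * b)))"
  assumes n: "1 \<le> n" and m: "0 \<le> m" and ab: "0 \<le> a" "a \<le> b" and lm: "l \<noteq> m"
  shows "(\<integral>\<^sup>+y. ennreal (erlang_density (n - 1) m y * exp (- l * (b - y))) * indicator {a..b} y \<partial>lborel)
           = ennreal X"
    and "0 \<le> X"
proof -
  define v where "v = m - l"
  have v: "v \<noteq> 0"
    using lm by (simp add: v_def)
  define F where "F y = - (m ^ n * exp (- l * b) / v ^ n) * (exp (- v * y) * trunc_exp n v y)" for y
  have F: "(F has_real_derivative erlang_density (n - 1) m y * exp (- l * (b - y))) (at y)"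
    if "y \<in> {a..b}" for y
    unfolding F_def v_def using that ab by (intro DERIV_erlang_density_exp_antiderivative n lm) auto
  have "F b - F a = m ^ n / v ^ n *
      (exp (- l * b) * exp (- v * a) * trunc_exp n v a - exp (- l * b) * exp (- v * b) * trunc_exp n v b)"
    using v by (simp add: F_def field_simps)
  also have "exp (- l * b) * exp (- v * a) = exp (- l * (b - a)) * exp (- m * a)"
    by (simp add: v_def algebra_simps flip: exp_add)
  also have "exp (- l * b) * exp (- v * b) = exp (- m * b)"
    by (simp add: v_def algebra_simps flip: exp_add)
  also have "exp (- l * (b - a)) * exp (- m * a) * trunc_exp n v a - exp (- m * b) * trunc_exp n v b
      = (\<Sum>i<n. v ^ i / fact i * (exp (- l * (b - a)) * (a ^ i * exp (- m * a)) - b ^ i * exp (- m * b)))"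
    by (simp add: trunc_exp_def sum_distrib_left power_mult_distrib field_simps flip: sum_subtractf)
  finally have FX: "F b - F a = X"
    by (simp add: X_def v_def)
  have "(\<lambda>y. erlang_density (n - 1) m y * exp (- l * (b - y))) \<in> borel_measurable borel"
    by measurable
  from nn_integral_FTC_Icc_nonneg[OF this ab(2) F] m
  show "(\<integral>\<^sup>+y. ennreal (erlang_density (n - 1) m y * exp (- l * (b - y))) * indicator {a..b} y \<partial>lborel)
      = ennreal X" and "0 \<le> X"
    by (simp_all add: FX)
qed

lemma nn_integral_erlang_density_exp_same_rate:
  fixes a b m :: real and n :: nat
  defines "X \<equiv> m ^ n / fact n * (b ^ n * exp (- m * b) - exp (- m * (b - a)) * (a ^ n * exp (- m * a)))"
  assumes n: "1 \<le> n" and m: "0 \<le> m" and ab: "0 \<le> a" "a \<le> b"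
  shows "(\<integral>\<^sup>+y. ennreal (erlang_density (n - 1) m y * exp (- m * (b - y))) * indicator {a..b} y \<partial>lborel)
           = ennreal X"
    and "0 \<le> X"
proof -
  obtain k where k: "n = Suc k"
    using n by (cases n) auto
  define F where "F y = m ^ n * exp (- m * b) / fact n * y ^ n" for y
  have F: "(F has_real_derivative erlang_density (n - 1) m y * exp (- m * (b - y))) (at y)"
    if "y \<in> {a..b}" for y
  proof -
    have "(F has_real_derivative m ^ n * exp (- m * b) / fact n * (real n * y ^ (n - Suc 0))) (at y)"
      unfolding F_def by (intro DERIV_cmult DERIV_pow)
    also have "m ^ n * exp (- m * b) / fact n * (real n * y ^ (n - Suc 0)) = m ^ n * y ^ k / fact k * exp (- m * b)"
      by (simp add: k fact_Suc)
    also have "exp (- m * b) = exp (- m * y) * exp (- m * (b - y))"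
      by (simp add: algebra_simps flip: exp_add)
    also have "m ^ n * y ^ k / fact k * (exp (- m * y) * exp (- m * (b - y)))
        = erlang_density (n - 1) m y * exp (- m * (b - y))"
      using that ab by (simp add: k erlang_density_def)
    finally show ?thesis .
  qed
  have "exp (- m * (b - a)) * exp (- m * a) = exp (- m * b)"
    by (subst exp_add[symmetric]) (simp add: algebra_simps)
  then have "exp (- m * (b - a)) * (a ^ n * exp (- m * a)) = a ^ n * exp (- m * b)"
    by (metis mult.left_commute)
  then have FX: "F b - F a = X"
    unfolding X_def by (simp only:) (simp add: F_def field_simps)
  have "(\<lambda>y. erlang_density (n - 1) m y * exp (- m * (b - y))) \<in> borel_measurable borel"
    by measurable
  from nn_integral_FTC_Icc_nonneg[OF this ab(2) F] m
  show "(\<integral>\<^sup>+y. ennreal (erlang_density (n - 1) m y * exp (- m * (b - y))) * indicator {a..b} y \<partial>lborel)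
      = ennreal X" and "0 \<le> X"
    by (simp_all add: FX)
qed

lemma nn_integral_has_bochner_integral:
  fixes f :: "'a \<Rightarrow> real"
  assumes "has_bochner_integral M f x" "AE \<omega> in M. 0 \<le> f \<omega>"
  shows "(\<integral>\<^sup>+\<omega>. ennreal (f \<omega>) \<partial>M) = ennreal x"
  using assms by (simp add: has_bochner_integral_iff nn_integral_eq_integral)

lemma (in prob_space) indep_var_disjoint_blocks:
  assumes indep: "indep_vars (\<lambda>_. borel) X I"
    and AB: "A \<inter> B = {}" "A \<subseteq> I" "B \<subseteq> I"
    and F: "F \<in> borel_measurable (PiM A (\<lambda>_. borel))" and G: "G \<in> borel_measurable (PiM B (\<lambda>_. borel))"
    and U: "\<And>\<omega>. U \<omega> = F (restrict (\<lambda>i. X i \<omega>) A)" and V: "\<And>\<omega>. V \<omega> = G (restrict (\<lambda>i. X i \<omega>) B)"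
  shows "indep_var borel U borel V"
proof -
  have "U = F \<circ> (\<lambda>\<omega>. restrict (\<lambda>i. X i \<omega>) A)" "V = G \<circ> (\<lambda>\<omega>. restrict (\<lambda>i. X i \<omega>) B)"
    using U V by (auto simp: fun_eq_iff)
  then show ?thesis
    using indep_var_compose[OF indep_var_restrict[OF indep AB] F G] by simp
qed

lemma (in prob_space) emeasure_indep_var_pair:
  fixes U V :: "'a \<Rightarrow> 'b::topological_space"
  assumes indep: "indep_var borel U borel V"
    and P[measurable]: "Measurable.pred (borel \<Otimes>\<^sub>M borel) (\<lambda>(x, y). P x y)"
  shows "emeasure M {\<omega> \<in> space M. P (U \<omega>) (V \<omega>)} = (\<integral>\<^sup>+\<omega>. emeasure M {\<omega>' \<in> space M. P (U \<omega>) (V \<omega>')} \<partial>M)"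
proof -
  have [measurable]: "U \<in> borel_measurable M" "V \<in> borel_measurable M"
    and distr_eq: "distr M borel U \<Otimes>\<^sub>M distr M borel V = distr M (borel \<Otimes>\<^sub>M borel) (\<lambda>\<omega>. (U \<omega>, V \<omega>))"
    using indep by (auto simp: indep_var_distribution_eq)
  interpret V: prob_space "distr M borel V"
    by (rule prob_space_distr) simp
  define S where "S = {z \<in> space (borel \<Otimes>\<^sub>M borel). case z of (x, y) \<Rightarrow> P x y}"
  have S[measurable]: "S \<in> sets (borel \<Otimes>\<^sub>M borel)"
    unfolding S_def by (rule predE[OF P])
  have "emeasure M {\<omega> \<in> space M. P (U \<omega>) (V \<omega>)} = emeasure (distr M (borel \<Otimes>\<^sub>M borel) (\<lambda>\<omega>. (U \<omega>, V \<omega>))) S"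
    by (subst emeasure_distr[OF _ S]) (auto simp: S_def space_pair_measure vimage_def Int_def conj_commute)
  also have "\<dots> = (\<integral>\<^sup>+x. emeasure (distr M borel V) (Pair x -` S) \<partial>distr M borel U)"
    unfolding distr_eq[symmetric] by (rule V.emeasure_pair_measure_alt) (use S in \<open>simp cong: sets_pair_measure_cong\<close>)
  also have "\<dots> = (\<integral>\<^sup>+\<omega>. emeasure (distr M borel V) (Pair (U \<omega>) -` S) \<partial>M)"
    by (subst nn_integral_distr) (auto intro!: V.measurable_emeasure_Pair)
  also have "\<dots> = (\<integral>\<^sup>+\<omega>. emeasure M {\<omega>' \<in> space M. P (U \<omega>) (V \<omega>')} \<partial>M)"
    by (intro nn_integral_cong, subst emeasure_distr) (auto simp: S_def space_pair_measure vimage_def Int_def conj_commute)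
  finally show ?thesis .
qed

section \<open>The inspection model\<close>

lemma measurable_insp_time:
  assumes "\<And>i. 1 \<le> i \<Longrightarrow> C i \<in> borel_measurable M"
  shows "insp_time C k \<in> borel_measurable M"
  unfolding insp_time_def[abs_def] by (rule borel_measurable_sum) (use assms in auto)

lemma measurable_insp_time_Bbar:
  assumes C: "\<And>i. 1 \<le> i \<Longrightarrow> C i \<in> borel_measurable M" and T[measurable]: "T \<in> borel_measurable M"
  shows "(\<lambda>\<omega>. Bbar C (T \<omega>) \<omega>) \<in> measurable M (count_space UNIV)"
    and "(\<lambda>\<omega>. insp_time C (Bbar C (T \<omega>) \<omega>) \<omega>) \<in> borel_measurable M"
proof -
  note [measurable] = measurable_insp_time[OF C]
  show B: "(\<lambda>\<omega>. Bbar C (T \<omega>) \<omega>) \<in> measurable M (count_space UNIV)"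
    unfolding Bbar_def by measurable
  show "(\<lambda>\<omega>. insp_time C (Bbar C (T \<omega>) \<omega>) \<omega>) \<in> borel_measurable M"
    by (rule measurable_compose_countable[where f="\<lambda>k \<omega>. insp_time C k \<omega>", OF _ B]) simp
qed

locale inspection_model = prob_space M for M :: "'a measure" +
  fixes n :: nat and mu lam :: real and Y Yd :: "'a \<Rightarrow> real" and C :: "nat \<Rightarrow> 'a \<Rightarrow> real"
  assumes n_pos: "1 \<le> n" and mu_pos: "0 < mu" and lam_pos: "0 < lam"
    and Y_distributed: "distributed M lborel Y (\<lambda>x. ennreal (erlang_density (n - 1) mu x))"
    and Yd_distributed: "distributed M lborel Yd (\<lambda>x. ennreal (exponential_density lam x))"
    and C_measurable[measurable]: "\<And>i. C i \<in> borel_measurable M"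
    and C_pos: "\<And>i \<omega>. 0 < C i \<omega>"
    and C_distr: "\<And>i. 1 \<le> i \<Longrightarrow> distr M borel (C i) = distr M borel (C 1)"
    and indep: "indep_vars (\<lambda>_. borel) (\<lambda>j. case j of Inl b \<Rightarrow> (if b then Y else Yd) | Inr i \<Rightarrow> C i)
           (range Inl \<union> Inr ` {1..})"
begin

abbreviation D :: "nat \<Rightarrow> 'a \<Rightarrow> real" where
  "D \<equiv> insp_time C"

definition laplace :: "real \<Rightarrow> real" where
  "laplace s = expectation (\<lambda>\<omega>. exp (- s * C 1 \<omega>))"

lemma Y_measurable[measurable]: "Y \<in> borel_measurable M"
  using Y_distributed by (simp add: distributed_def)

lemma Yd_measurable[measurable]: "Yd \<in> borel_measurable M"
  using Yd_distributed by (simp add: distributed_def)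

lemma D_eq: "D k = (\<lambda>\<omega>. \<Sum>i\<in>{1..k}. C i \<omega>)"
  by (simp add: insp_time_def fun_eq_iff)

lemma D_measurable[measurable]: "D k \<in> borel_measurable M"
  unfolding D_eq by measurable

lemma D_0[simp]: "D 0 \<omega> = 0"
  by (simp add: D_eq)

lemma D_Suc: "D (Suc k) \<omega> = D k \<omega> + C (Suc k) \<omega>"
  by (simp add: D_eq)

lemma D_nonneg: "0 \<le> D k \<omega>"
  unfolding D_eq by (intro sum_nonneg) (simp add: less_imp_le C_pos)

lemma D_mono: "j \<le> k \<Longrightarrow> D j \<omega> \<le> D k \<omega>"
  unfolding D_eq using C_pos by (intro sum_mono2) (auto simp: less_imp_le)

lemma measurable_sum_Inr:
  assumes "Inr ` {1..k} \<subseteq> A"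
  shows "(\<lambda>x::bool + nat \<Rightarrow> real. \<Sum>i\<in>{1..k}. x (Inr i)) \<in> borel_measurable (PiM A (\<lambda>_. borel))"
  using assms by (intro borel_measurable_sum measurable_component_singleton) auto

lemma indep_D_Y: "indep_var borel (D k) borel Y"
  by (rule indep_var_disjoint_blocks[OF indep, where A="Inr ` {1..k}" and B="{Inl True}"
        and F="\<lambda>x. \<Sum>i\<in>{1..k}. x (Inr i)" and G="\<lambda>x. x (Inl True)"])
     (auto simp: D_eq intro!: measurable_sum_Inr measurable_component_singleton)

lemma indep_D_C: "indep_var borel (D k) borel (C (Suc k))"
  by (rule indep_var_disjoint_blocks[OF indep, where A="Inr ` {1..k}" and B="{Inr (Suc k)}"
        and F="\<lambda>x. \<Sum>i\<in>{1..k}. x (Inr i)" and G="\<lambda>x. x (Inr (Suc k))"])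
     (auto simp: D_eq intro!: measurable_sum_Inr measurable_component_singleton)

lemma indep_Y_Yd: "indep_var borel Y borel Yd"
  by (rule indep_var_disjoint_blocks[OF indep, where A="{Inl True}" and B="{Inl False}"
        and F="\<lambda>x. x (Inl True)" and G="\<lambda>x. x (Inl False)"])
     (auto intro!: measurable_component_singleton)

lemma indep_D_C_Y_Yd: "indep_var borel (\<lambda>\<omega>. (D k \<omega>, C (Suc k) \<omega>)) borel (\<lambda>\<omega>. (Y \<omega>, Yd \<omega>))"
proof (rule indep_var_disjoint_blocks[OF indep, where A="Inr ` {1..Suc k}" and B="{Inl True, Inl False}"
      and F="\<lambda>x. (\<Sum>i\<in>{1..k}. x (Inr i), x (Inr (Suc k)))" and G="\<lambda>x. (x (Inl True), x (Inl False))"])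
  show "(\<lambda>x :: bool + nat \<Rightarrow> real. (\<Sum>i\<in>{1..k}. x (Inr i), x (Inr (Suc k)))) \<in> borel_measurable (PiM (Inr ` {1..Suc k}) (\<lambda>_. borel))"
    by (intro borel_measurable_Pair measurable_sum_Inr measurable_component_singleton) auto
  show "(\<lambda>x :: bool + nat \<Rightarrow> real. (x (Inl True), x (Inl False))) \<in> borel_measurable (PiM {Inl True, Inl False} (\<lambda>_. borel))"
    by (intro borel_measurable_Pair measurable_component_singleton) auto
qed (auto simp: D_eq)

lemma integrable_exp_C: "0 \<le> s \<Longrightarrow> integrable M (\<lambda>\<omega>. exp (- s * C i \<omega>))"
  by (rule integrable_const_bound[where B=1]) (auto simp: C_pos less_imp_le)

lemma expectation_C_eq_C1:
  fixes g :: "real \<Rightarrow> real"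
  assumes "1 \<le> i" and g[measurable]: "g \<in> borel_measurable borel"
  shows "expectation (\<lambda>\<omega>. g (C i \<omega>)) = expectation (\<lambda>\<omega>. g (C 1 \<omega>))"
proof -
  have "expectation (\<lambda>\<omega>. g (C i \<omega>)) = (\<integral>x. g x \<partial>distr M borel (C i))"
    by (subst integral_distr) auto
  also have "\<dots> = (\<integral>x. g x \<partial>distr M borel (C 1))"
    using C_distr[OF assms(1)] by simp
  also have "\<dots> = expectation (\<lambda>\<omega>. g (C 1 \<omega>))"
    by (subst integral_distr) auto
  finally show ?thesis .
qed

lemma laplace_power:
  assumes s: "0 \<le> s"
  shows "expectation (\<lambda>\<omega>. exp (- s * D k \<omega>)) = laplace s ^ k"
proof -
  define X where "X = (\<lambda>j \<omega>. exp (- s * (case j of Inl b \<Rightarrow> (if b then Y else Yd) | Inr i \<Rightarrow> C i) \<omega>))"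
  have indep_X: "indep_vars (\<lambda>_. borel) X (Inr ` {1..k})"
    unfolding X_def by (rule indep_vars_compose2[OF indep_vars_subset[OF indep]]) auto
  have "expectation (\<lambda>\<omega>. exp (- s * D k \<omega>)) = expectation (\<lambda>\<omega>. \<Prod>j\<in>Inr ` {1..k}. X j \<omega>)"
    by (simp add: X_def D_eq sum_distrib_left exp_sum prod.reindex)
  also have "\<dots> = (\<Prod>j\<in>Inr ` {1..k}. expectation (X j))"
    by (rule indep_vars_lebesgue_integral[OF _ indep_X]) (use integrable_exp_C[OF s] in \<open>auto simp: X_def\<close>)
  also have "\<dots> = (\<Prod>i\<in>{1..k}. expectation (\<lambda>\<omega>. exp (- s * C i \<omega>)))"
    by (simp add: X_def prod.reindex)
  also have "\<dots> = (\<Prod>i\<in>{1..k}. laplace s)"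
    unfolding laplace_def by (intro prod.cong refl expectation_C_eq_C1) auto
  finally show ?thesis
    by simp
qed

lemma laplace_nonneg: "0 \<le> laplace s"
  unfolding laplace_def by (intro integral_nonneg_AE) auto

lemma laplace_less_1:
  assumes "0 < s"
  shows "laplace s < 1"
proof -
  have "laplace s < expectation (\<lambda>\<omega>. 1)"
    unfolding laplace_def using assms C_pos integrable_exp_C[of s 1]
    by (intro integral_less_AE_space) (auto simp: emeasure_space_1)
  then show ?thesis
    by (simp add: prob_space)
qed

section \<open>Moments of the inspection times\<close>

definition moment :: "nat \<Rightarrow> real \<Rightarrow> nat \<Rightarrow> real" where
  "moment i s k = expectation (\<lambda>\<omega>. D k \<omega> ^ i * exp (- s * D k \<omega>))"

definition moment_sum :: "nat \<Rightarrow> real \<Rightarrow> real" where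
  "moment_sum i s = (\<Sum>k. moment i s k)"

lemma integrable_moment:
  assumes "0 < s"
  shows "integrable M (\<lambda>\<omega>. D k \<omega> ^ i * exp (- s * D k \<omega>))"
  by (rule integrable_const_bound[where B="fact i * (2 / s) ^ i"])
     (use assms power_mult_exp_bounded[OF D_nonneg assms] in \<open>auto simp: D_nonneg\<close>)

lemma moment_nonneg: "0 \<le> moment i s k"
  unfolding moment_def by (intro integral_nonneg_AE) (simp add: D_nonneg)

lemma has_bochner_integral_moment:
  assumes "0 < s"
  shows "has_bochner_integral M (\<lambda>\<omega>. D k \<omega> ^ i * exp (- s * D k \<omega>)) (moment i s k)"
  unfolding moment_def by (intro has_bochner_integral_integrable integrable_moment assms)

lemma nn_integral_moment:
  assumes "0 < s"
  shows "(\<integral>\<^sup>+\<omega>. ennreal (D k \<omega> ^ i * exp (- s * D k \<omega>)) \<partial>M) = ennreal (moment i s k)"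
  by (intro nn_integral_has_bochner_integral has_bochner_integral_moment assms) (simp add: D_nonneg)

lemma moment_zero: "0 \<le> s \<Longrightarrow> moment 0 s k = laplace s ^ k"
  using laplace_power[of s k] by (simp add: moment_def)

lemma moment_le:
  assumes "0 < s"
  shows "moment i s k \<le> fact i * (2 / s) ^ i * laplace (s / 2) ^ k"
proof -
  have "moment i s k \<le> expectation (\<lambda>\<omega>. fact i * (2 / s) ^ i * exp (- (s / 2) * D k \<omega>))"
    unfolding moment_def using integrable_moment[of "s / 2" k 0] assms
    by (intro integral_mono integrable_moment integrable_mult_right power_mult_exp_le D_nonneg) auto
  also have "\<dots> = fact i * (2 / s) ^ i * laplace (s / 2) ^ k"
    using laplace_power[of "s / 2" k] assms by simp
  finally show ?thesis .
qed

lemma summable_moment: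
  assumes "0 < s"
  shows "summable (\<lambda>k. moment i s k)"
proof (rule summable_comparison_test)
  show "\<exists>N. \<forall>k\<ge>N. norm (moment i s k) \<le> fact i * (2 / s) ^ i * laplace (s / 2) ^ k"
    using moment_le[OF assms] moment_nonneg by auto
  show "summable (\<lambda>k. fact i * (2 / s) ^ i * laplace (s / 2) ^ k)"
    using laplace_nonneg laplace_less_1[of "s / 2"] assms by (intro summable_mult summable_geometric) auto
qed

lemma moment_sums:
  assumes "0 < s"
  shows "(\<lambda>k. moment i s k) sums moment_sum i s"
  unfolding moment_sum_def by (rule summable_sums[OF summable_moment[OF assms]])

lemma moment_sum_zero:
  assumes "0 < s"
  shows "moment_sum 0 s = 1 / (1 - laplace s)"
  using suminf_geometric[of "laplace s"] laplace_nonneg laplace_less_1[OF assms] assms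
  by (simp add: moment_sum_def moment_zero)

lemma moment_sum_nonneg: "0 < s \<Longrightarrow> 0 \<le> moment_sum i s"
  unfolding moment_sum_def by (intro suminf_nonneg summable_moment moment_nonneg)

lemma moment_expansion:
  assumes "0 < s" "s \<le> c"
  shows "(\<lambda>j. moment (i + j) c k * ((c - s) ^ j / fact j)) sums moment i s k"
proof -
  define a where "a j = (c - s) ^ j / fact j" for j
  have a: "0 \<le> a j" for j
    using assms by (simp add: a_def)
  have c: "0 < c"
    using assms by simp
  have "ennreal (moment i s k) = (\<integral>\<^sup>+\<omega>. ennreal (D k \<omega> ^ i * exp (- s * D k \<omega>)) \<partial>M)"
    by (rule nn_integral_moment[symmetric]) fact
  also have "\<dots> = (\<integral>\<^sup>+\<omega>. (\<Sum>j. ennreal (D k \<omega> ^ (i + j) * exp (- c * D k \<omega>) * a j)) \<partial>M)"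
    unfolding a_def using assms
    by (intro nn_integral_cong suminf_ennreal_eq[symmetric] sums_power_mult_exp_shift mult_nonneg_nonneg)
       (auto simp: D_nonneg)
  also have "\<dots> = (\<Sum>j. \<integral>\<^sup>+\<omega>. ennreal (D k \<omega> ^ (i + j) * exp (- c * D k \<omega>)) * ennreal (a j) \<partial>M)"
    by (subst nn_integral_suminf) (auto simp: a ennreal_mult'')
  also have "\<dots> = (\<Sum>j. (\<integral>\<^sup>+\<omega>. ennreal (D k \<omega> ^ (i + j) * exp (- c * D k \<omega>)) \<partial>M) * ennreal (a j))"
    by (intro suminf_cong nn_integral_multc) auto
  also have "\<dots> = (\<Sum>j. ennreal (moment (i + j) c k * a j))"
    unfolding nn_integral_moment[OF c] by (simp add: a ennreal_mult'')
  finally show ?thesis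
    unfolding a_def[symmetric] using mult_nonneg_nonneg[OF moment_nonneg a]
    by (subst sums_ennreal[symmetric]) (auto intro: summable_sums moment_nonneg)
qed

lemma moment_sum_expansion:
  assumes "0 < s" "s \<le> c"
  shows "(\<lambda>j. moment_sum (i + j) c * ((c - s) ^ j / fact j)) sums moment_sum i s"
proof -
  define a where "a j = (c - s) ^ j / fact j" for j
  have a: "0 \<le> a j" for j
    using assms by (simp add: a_def)
  have c: "0 < c"
    using assms by simp
  have "ennreal (moment_sum i s) = (\<Sum>k. ennreal (moment i s k))"
    unfolding moment_sum_def
    by (rule suminf_ennreal2[symmetric]) (use summable_moment assms moment_nonneg in auto)
  also have "\<dots> = (\<Sum>k. \<Sum>j. ennreal (moment (i + j) c k * a j))"
    using moment_expansion[OF assms] unfolding a_def[symmetric]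
    by (intro suminf_cong suminf_ennreal_eq[symmetric] mult_nonneg_nonneg moment_nonneg a)
  also have "\<dots> = (\<Sum>j. \<Sum>k. ennreal (moment (i + j) c k * a j))"
    by (rule suminf_ennreal_swap)
  also have "\<dots> = (\<Sum>j. ennreal (moment_sum (i + j) c * a j))"
    by (intro suminf_cong suminf_ennreal_eq sums_mult2 moment_sums c mult_nonneg_nonneg moment_nonneg a)
  finally show ?thesis
    unfolding a_def[symmetric] using mult_nonneg_nonneg[OF moment_sum_nonneg[OF c] a]
    by (subst sums_ennreal[symmetric]) (auto intro: summable_sums moment_sum_nonneg assms(1))
qed

lemma higher_deriv_inv_one_minus_laplace:
  assumes x: "0 < x"
  shows "(-1) ^ i * (deriv ^^ i) (\<lambda>s. 1 / (1 - laplace s)) x = moment_sum i x"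
proof -
  define c where "c = 2 * x"
  define b where "b i j = moment_sum (i + j) c / fact j" for i j
  have sums: "(\<lambda>j. b i j * (c - s) ^ j) sums moment_sum i s" if "0 < s" "s \<le> c" for i s
    using moment_sum_expansion[OF that, of i] by (simp add: b_def field_simps)
  have "\<forall>\<^sub>F s in nhds x. s \<in> {0<..<c}"
    using x by (intro eventually_nhds_in_open) (auto simp: c_def)
  then have "\<forall>\<^sub>F s in nhds x. 1 / (1 - laplace s) = (\<Sum>j. b 0 j * (c - s) ^ j)"
    by eventually_elim (use sums moment_sum_zero in \<open>auto simp: sums_iff\<close>)
  then have "(deriv ^^ i) (\<lambda>s. 1 / (1 - laplace s)) x = (deriv ^^ i) (\<lambda>s. \<Sum>j. b 0 j * (c - s) ^ j) x"
    by (rule higher_deriv_cong_ev[OF _ refl])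
  also have "\<dots> = (-1) ^ i * (\<Sum>j. b i j * (c - x) ^ j)"
  proof (rule higher_deriv_reflected_power_series[where R=c])
    show "0 \<le> b i j" for i j
      using x by (simp add: b_def c_def moment_sum_nonneg)
    show "summable (\<lambda>j. b i j * K ^ j)" if "0 \<le> K" "K < c" for i K
      using sums[of "c - K" i] that by (auto simp: sums_iff)
    show "diffs (b i) = b (Suc i)" for i
      by (simp add: diffs_def b_def fun_eq_iff fact_Suc)
    show "x \<in> ball c c"
      using x by (simp add: c_def dist_real_def)
  qed
  also have "\<dots> = (-1) ^ i * moment_sum i x"
    using sums[of x i] x by (simp add: c_def sums_iff)
  finally show ?thesis
    by (simp flip: power_mult_distrib)
qed

lemma higher_deriv_laplace_ratio:
  assumes x: "0 < x"
  shows "(-1) ^ i * (deriv ^^ i) (\<lambda>s. laplace s / (1 - laplace s)) x = moment_sum i x - 0 ^ i"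
proof -
  have "\<forall>\<^sub>F s in nhds x. s \<in> {0<..}"
    using x by (intro eventually_nhds_in_open) auto
  then have "\<forall>\<^sub>F s in nhds x. laplace s / (1 - laplace s) = 1 / (1 - laplace s) - 1"
  proof eventually_elim
    case (elim s)
    then show ?case
      using laplace_less_1[of s] by (simp add: field_simps)
  qed
  then have "(deriv ^^ i) (\<lambda>s. laplace s / (1 - laplace s)) x = (deriv ^^ i) (\<lambda>s. 1 / (1 - laplace s) - 1) x"
    by (rule higher_deriv_cong_ev[OF _ refl])
  also have "\<dots> = (deriv ^^ i) (\<lambda>s. 1 / (1 - laplace s)) x - 0 ^ i"
    by (cases i) (simp_all only: funpow_Suc_right comp_def deriv_diff_const, simp_all)
  finally show ?thesis
    using higher_deriv_inv_one_minus_laplace[OF x, of i] by (cases i) (simp_all add: right_diff_distrib)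
qed

section \<open>The expected number of inspections\<close>

lemma prob_Y_greater:
  assumes "0 \<le> a"
  shows "prob {\<omega> \<in> space M. a < Y \<omega>} = (\<Sum>i<n. mu ^ i / fact i * (a ^ i * exp (- mu * a)))"
proof -
  have "prob {\<omega> \<in> space M. a < Y \<omega>} = 1 - erlang_CDF (n - 1) mu a"
    using erlang_distributed_gt[OF Y_distributed mu_pos assms] by simp
  also have "\<dots> = (\<Sum>i\<le>n - 1. (mu * a) ^ i * exp (- mu * a) / fact i)"
    using assms by (simp add: erlang_CDF_def)
  also have "{..n - 1} = {..<n}"
    using n_pos by auto
  finally show ?thesis
    by (simp add: power_mult_distrib field_simps)
qed

lemma AE_Y_pos: "AE \<omega> in M. 0 < Y \<omega>"
proof -
  have "prob {\<omega> \<in> space M. 0 < Y \<omega>} = 1"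
    using prob_Y_greater[of 0] sum_lessThan_mult_zero_power[OF n_pos, of "\<lambda>i. mu ^ i / fact i"]
    by (simp add: mult.commute)
  then show ?thesis
    by (subst (asm) prob_eq_1) auto
qed

definition inspection_before_damage :: "nat \<Rightarrow> 'a set" where
  "inspection_before_damage k = {\<omega> \<in> space M. D k \<omega> < Y \<omega>}"

lemma inspection_before_damage_sets[measurable]: "inspection_before_damage k \<in> sets M"
  unfolding inspection_before_damage_def by measurable

lemma prob_inspection_before_damage:
  "prob (inspection_before_damage k) = (\<Sum>i<n. mu ^ i / fact i * moment i mu k)"
proof -
  have "emeasure M (inspection_before_damage k) = (\<integral>\<^sup>+\<omega>. emeasure M {\<omega>' \<in> space M. D k \<omega> < Y \<omega>'} \<partial>M)"
    unfolding inspection_before_damage_def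
    by (rule emeasure_indep_var_pair[OF indep_D_Y, where P="(<)"]) measurable
  also have "\<dots> = (\<integral>\<^sup>+\<omega>. ennreal (\<Sum>i<n. mu ^ i / fact i * (D k \<omega> ^ i * exp (- mu * D k \<omega>))) \<partial>M)"
    by (intro nn_integral_cong) (simp add: emeasure_eq_measure prob_Y_greater D_nonneg)
  also have "\<dots> = ennreal (\<Sum>i<n. mu ^ i / fact i * moment i mu k)"
    using mu_pos
    by (intro nn_integral_has_bochner_integral has_bochner_integral_sum has_bochner_integral_mult_right
          has_bochner_integral_moment)
       (auto simp: D_nonneg intro!: sum_nonneg)
  finally show ?thesis
    using mu_pos by (simp add: emeasure_eq_measure moment_nonneg sum_nonneg)
qed

lemma sums_prob_inspection_before_damage:
  "(\<lambda>k. prob (inspection_before_damage k)) sums (\<Sum>i<n. mu ^ i / fact i * moment_sum i mu)"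
  unfolding prob_inspection_before_damage by (intro sums_sum sums_mult moment_sums mu_pos)

lemma AE_damage_inspected: "AE \<omega> in M. \<exists>k. Y \<omega> \<le> D k \<omega>"
proof -
  define N where "N = {\<omega> \<in> space M. \<forall>k. D k \<omega> < Y \<omega>}"
  have [measurable]: "N \<in> sets M"
    unfolding N_def by measurable
  have "(\<lambda>k. prob (inspection_before_damage k)) \<longlonglongrightarrow> 0"
    using sums_prob_inspection_before_damage by (intro summable_LIMSEQ_zero sums_summable)
  moreover have "prob N \<le> prob (inspection_before_damage k)" for k
    by (rule finite_measure_mono) (auto simp: N_def inspection_before_damage_def)
  ultimately have "prob N \<le> 0"
    by (intro LIMSEQ_le_const) auto
  then have "AE \<omega> in M. \<omega> \<notin> N"
    using measure_nonneg[of M N] by (subst prob_eq_0[symmetric]) auto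
  then show ?thesis
    by (auto simp: N_def not_less)
qed

lemma less_Bbar_iff:
  assumes "0 < Y \<omega>" "Y \<omega> \<le> D k0 \<omega>"
  shows "D k \<omega> < Y \<omega> \<longleftrightarrow> k < Bbar C (Y \<omega>) \<omega>"
proof -
  let ?P = "\<lambda>k. 1 \<le> k \<and> Y \<omega> \<le> D k \<omega>"
  have "?P (Suc k0)"
    using assms D_mono[of k0 "Suc k0" \<omega>] by auto
  then have B: "?P (Bbar C (Y \<omega>) \<omega>)"
    unfolding Bbar_def by (rule LeastI)
  have "\<not> ?P k" if "k < Bbar C (Y \<omega>) \<omega>"
    using not_less_Least[of k ?P] that by (simp add: Bbar_def)
  moreover have "D k \<omega> < Y \<omega>" if "k = 0"
    using assms(1) that by simp
  moreover have "Y \<omega> \<le> D k \<omega>" if "Bbar C (Y \<omega>) \<omega> \<le> k"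
    using B D_mono[OF that, of \<omega>] by simp
  ultimately show ?thesis
    by (metis less_one not_le)
qed

lemma Bbar_eq_suminf: "AE \<omega> in M. ennreal (real (Bbar C (Y \<omega>) \<omega>)) = (\<Sum>k. indicator (inspection_before_damage k) \<omega>)"
  using AE_damage_inspected AE_Y_pos AE_space
proof eventually_elim
  case (elim \<omega>)
  then obtain k0 where k0: "Y \<omega> \<le> D k0 \<omega>"
    by auto
  then have "indicator (inspection_before_damage k) \<omega> = (if k < Bbar C (Y \<omega>) \<omega> then 1 else 0 :: ennreal)" for k
    using less_Bbar_iff[OF _ k0, of k] elim by (simp add: inspection_before_damage_def)
  then have "(\<Sum>k. indicator (inspection_before_damage k) \<omega> :: ennreal) = (\<Sum>k<Bbar C (Y \<omega>) \<omega>. 1)"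
    by (subst suminf_finite[where N="{..<Bbar C (Y \<omega>) \<omega>}"]) auto
  then show ?case
    by (simp add: ennreal_of_nat_eq_real_of_nat)
qed

theorem expected_inspections:
  "(\<integral>\<^sup>+\<omega>. ennreal (real (Bbar C (Y \<omega>) \<omega>)) \<partial>M)
     = ennreal (\<Sum>i<n. mu ^ i / fact i * (-1) ^ i * (deriv ^^ i) (\<lambda>s. 1 / (1 - laplace s)) mu)"
proof -
  have "(\<integral>\<^sup>+\<omega>. ennreal (real (Bbar C (Y \<omega>) \<omega>)) \<partial>M) = (\<integral>\<^sup>+\<omega>. (\<Sum>k. indicator (inspection_before_damage k) \<omega>) \<partial>M)"
    by (rule nn_integral_cong_AE[OF Bbar_eq_suminf])
  also have "\<dots> = (\<Sum>k. ennreal (prob (inspection_before_damage k)))"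
    by (subst nn_integral_suminf) (auto simp: emeasure_eq_measure)
  also have "\<dots> = ennreal (\<Sum>i<n. mu ^ i / fact i * moment_sum i mu)"
    by (rule suminf_ennreal_eq[OF _ sums_prob_inspection_before_damage]) simp
  also have "(\<Sum>i<n. mu ^ i / fact i * moment_sum i mu)
      = (\<Sum>i<n. mu ^ i / fact i * (-1) ^ i * (deriv ^^ i) (\<lambda>s. 1 / (1 - laplace s)) mu)"
    by (simp add: higher_deriv_inv_one_minus_laplace[OF mu_pos] mult.assoc)
  finally show ?thesis .
qed

section \<open>Detection before failure\<close>

text \<open>The closed form of \<open>P(a < Y \<le> a + c < Y + Yd)\<close>, see \<open>emeasure_detection\<close>.\<close>

definition detection_prob :: "real \<Rightarrow> real \<Rightarrow> real" where
  "detection_prob a c = (if lam \<noteq> mu then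
       mu ^ n / (mu - lam) ^ n * (\<Sum>i<n. (mu - lam) ^ i / fact i *
         (exp (- lam * c) * (a ^ i * exp (- mu * a)) - (a + c) ^ i * exp (- mu * (a + c))))
     else mu ^ n / fact n * ((a + c) ^ n * exp (- mu * (a + c)) - exp (- mu * c) * (a ^ n * exp (- mu * a))))"

lemma nn_integral_detection_density:
  assumes "0 \<le> a" "0 < c"
  shows "(\<integral>\<^sup>+y. ennreal (erlang_density (n - 1) mu y * exp (- lam * (a + c - y))) * indicator {a..a + c} y \<partial>lborel)
           = ennreal (detection_prob a c)"
    and "0 \<le> detection_prob a c"
  using nn_integral_erlang_density_exp[of n mu a "a + c" lam] mu_pos
    nn_integral_erlang_density_exp_same_rate[of n mu a "a + c"] assms n_pos
  by (auto simp: detection_prob_def)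

lemma emeasure_detection:
  assumes "0 \<le> a" "0 < c"
  shows "emeasure M {\<omega> \<in> space M. a < Y \<omega> \<and> Y \<omega> \<le> a + c \<and> a + c < Y \<omega> + Yd \<omega>} = ennreal (detection_prob a c)"
proof -
  define b where "b = a + c"
  have "emeasure M {\<omega> \<in> space M. a < Y \<omega> \<and> Y \<omega> \<le> b \<and> b < Y \<omega> + Yd \<omega>}
      = (\<integral>\<^sup>+\<omega>. emeasure M {\<omega>' \<in> space M. a < Y \<omega> \<and> Y \<omega> \<le> b \<and> b < Y \<omega> + Yd \<omega>'} \<partial>M)"
    by (rule emeasure_indep_var_pair[OF indep_Y_Yd, where P="\<lambda>y z. a < y \<and> y \<le> b \<and> b < y + z"]) measurable
  also have "\<dots> = (\<integral>\<^sup>+\<omega>. ennreal (indicator {a<..b} (Y \<omega>) * exp (- lam * (b - Y \<omega>))) \<partial>M)"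
  proof (intro nn_integral_cong)
    fix \<omega>
    have "emeasure M {\<omega>' \<in> space M. b - Y \<omega> < Yd \<omega>'} = ennreal (exp (- lam * (b - Y \<omega>)))"
      if "Y \<omega> \<le> b"
      using exponential_distributedD_gt[OF Yd_distributed, of "b - Y \<omega>"] that lam_pos
      by (simp add: emeasure_eq_measure algebra_simps)
    moreover have "b < Y \<omega> + Yd \<omega>' \<longleftrightarrow> b - Y \<omega> < Yd \<omega>'" for \<omega>'
      by auto
    ultimately show "emeasure M {\<omega>' \<in> space M. a < Y \<omega> \<and> Y \<omega> \<le> b \<and> b < Y \<omega> + Yd \<omega>'}
        = ennreal (indicator {a<..b} (Y \<omega>) * exp (- lam * (b - Y \<omega>)))"
      by (cases "a < Y \<omega> \<and> Y \<omega> \<le> b") (auto simp: indicator_def)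
  qed
  also have "\<dots> = (\<integral>\<^sup>+y. ennreal (erlang_density (n - 1) mu y) * ennreal (indicator {a<..b} y * exp (- lam * (b - y))) \<partial>lborel)"
    by (rule distributed_nn_integral[OF Y_distributed, symmetric]) measurable
  also have "\<dots> = (\<integral>\<^sup>+y. ennreal (erlang_density (n - 1) mu y * exp (- lam * (b - y))) * indicator {a..b} y \<partial>lborel)"
    using AE_lborel_singleton[of a] mu_pos
    by (intro nn_integral_cong_AE) (auto elim!: eventually_mono simp: indicator_def ennreal_mult'')
  also have "\<dots> = ennreal (detection_prob a c)"
    using nn_integral_detection_density[OF assms] by (simp add: b_def)
  finally show ?thesis
    by (simp add: b_def)
qed

definition timely_detection :: "nat \<Rightarrow> 'a set" where
  "timely_detection k = {\<omega> \<in> space M. D k \<omega> < Y \<omega> \<and> Y \<omega> \<le> D (Suc k) \<omega> \<and> D (Suc k) \<omega> < Y \<omega> + Yd \<omega>}"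

lemma timely_detection_sets[measurable]: "timely_detection k \<in> sets M"
  unfolding timely_detection_def by measurable

lemma emeasure_timely_detection:
  "emeasure M (timely_detection k) = (\<integral>\<^sup>+\<omega>. ennreal (detection_prob (D k \<omega>) (C (Suc k) \<omega>)) \<partial>M)"
proof -
  let ?P = "\<lambda>p q :: real \<times> real. fst p < fst q \<and> fst q \<le> fst p + snd p \<and> fst p + snd p < fst q + snd q"
  have "Measurable.pred (borel \<Otimes>\<^sub>M borel) (\<lambda>(p, q). ?P p q)"
    unfolding borel_prod[symmetric] by measurable
  from emeasure_indep_var_pair[OF indep_D_C_Y_Yd this]
  have "emeasure M (timely_detection k) = (\<integral>\<^sup>+\<omega>. emeasure M {\<omega>' \<in> space M.
      D k \<omega> < Y \<omega>' \<and> Y \<omega>' \<le> D k \<omega> + C (Suc k) \<omega> \<and> D k \<omega> + C (Suc k) \<omega> < Y \<omega>' + Yd \<omega>'} \<partial>M)"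
    by (simp add: timely_detection_def D_Suc)
  also have "\<dots> = (\<integral>\<^sup>+\<omega>. ennreal (detection_prob (D k \<omega>) (C (Suc k) \<omega>)) \<partial>M)"
    by (intro nn_integral_cong emeasure_detection D_nonneg C_pos)
  finally show ?thesis .
qed

lemma moment_at_0: "moment i s 0 = 0 ^ i"
  by (simp add: moment_def prob_space)

lemma has_bochner_integral_exp_C_moment:
  assumes "0 \<le> s"
  shows "has_bochner_integral M (\<lambda>\<omega>. exp (- s * C (Suc k) \<omega>) * (D k \<omega> ^ i * exp (- mu * D k \<omega>)))
           (laplace s * moment i mu k)"
proof -
  have indep: "indep_var borel ((\<lambda>x. x ^ i * exp (- mu * x)) \<circ> D k) borel ((\<lambda>x. exp (- s * x)) \<circ> C (Suc k))"
    by (rule indep_var_compose[OF indep_D_C]) auto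
  have "expectation (\<lambda>\<omega>. exp (- s * C (Suc k) \<omega>)) = laplace s"
    unfolding laplace_def by (rule expectation_C_eq_C1) auto
  then have "has_bochner_integral M (\<lambda>\<omega>. (D k \<omega> ^ i * exp (- mu * D k \<omega>)) * exp (- s * C (Suc k) \<omega>))
      (moment i mu k * laplace s)"
    using indep_var_integrable[OF indep] indep_var_lebesgue_integral[OF indep]
      integrable_exp_C[OF assms] integrable_moment[OF mu_pos]
    by (simp add: has_bochner_integral_iff comp_def moment_def)
  then show ?thesis
    by (simp add: mult_ac)
qed

lemma prob_timely_detection:
  "prob (timely_detection k) = (if lam \<noteq> mu then
      mu ^ n / (mu - lam) ^ n * (\<Sum>i<n. (mu - lam) ^ i / fact i * (laplace lam * moment i mu k - moment i mu (Suc k)))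
    else mu ^ n / fact n * (moment n mu (Suc k) - laplace mu * moment n mu k))"
    (is "_ = ?p")
proof -
  have integral: "has_bochner_integral M (\<lambda>\<omega>. detection_prob (D k \<omega>) (C (Suc k) \<omega>)) ?p"
  proof (cases "lam = mu")
    case True
    then show ?thesis
      unfolding detection_prob_def D_Suc[symmetric] if_not_P[OF not_not[THEN iffD2, OF True]]
      using mu_pos
      by (intro has_bochner_integral_mult_right has_bochner_integral_diff has_bochner_integral_moment
          has_bochner_integral_exp_C_moment) auto
  next
    case False
    then show ?thesis
      unfolding detection_prob_def D_Suc[symmetric] if_P[OF False]
      using mu_pos lam_pos
      by (intro has_bochner_integral_mult_right has_bochner_integral_sum has_bochner_integral_diff
          has_bochner_integral_moment has_bochner_integral_exp_C_moment) auto
  qed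
  have nonneg: "0 \<le> detection_prob (D k \<omega>) (C (Suc k) \<omega>)" for \<omega>
    by (rule nn_integral_detection_density(2)[OF D_nonneg C_pos])
  have "emeasure M (timely_detection k) = ennreal ?p"
    unfolding emeasure_timely_detection using integral nonneg by (intro nn_integral_has_bochner_integral) auto
  moreover have "0 \<le> ?p"
    unfolding has_bochner_integral_integral_eq[OF integral, symmetric] by (intro integral_nonneg_AE) (simp add: nonneg)
  ultimately show ?thesis
    by (simp add: emeasure_eq_measure)
qed

definition failure_before_detection :: "'a set" where
  "failure_before_detection = {\<omega> \<in> space M. Y \<omega> + Yd \<omega> \<le> D (Bbar C (Y \<omega>) \<omega>) \<omega>}"

lemma failure_before_detection_sets[measurable]: "failure_before_detection \<in> sets M"
  using measurable_insp_time_Bbar(2)[OF C_measurable Y_measurable]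
  unfolding failure_before_detection_def by measurable

lemma disjoint_timely_detection: "disjoint_family timely_detection"
proof -
  have "\<omega> \<notin> timely_detection j \<inter> timely_detection k" if "j < k" for j k \<omega>
    using D_mono[OF Suc_leI[OF that], of \<omega>] by (auto simp: timely_detection_def)
  then show ?thesis
    unfolding disjoint_family_on_def by (metis Int_commute equals0I linorder_neqE_nat)
qed

lemma AE_timely_detection_iff: "AE \<omega> in M. \<omega> \<in> space M - failure_before_detection \<longleftrightarrow> \<omega> \<in> (\<Union>k. timely_detection k)"
  using AE_damage_inspected AE_Y_pos AE_space
proof eventually_elim
  case (elim \<omega>)
  then obtain k0 where k0: "Y \<omega> \<le> D k0 \<omega>"
    by auto
  define m where "m = Bbar C (Y \<omega>) \<omega>"
  have less_m: "D j \<omega> < Y \<omega> \<longleftrightarrow> j < m" for j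
    using less_Bbar_iff[OF _ k0, of j] elim by (simp add: m_def)
  have "0 < m"
    using less_m[of 0] elim by simp
  then obtain k where m: "m = Suc k"
    using gr0_implies_Suc by blast
  have "\<omega> \<in> timely_detection j \<longleftrightarrow> j = k \<and> D m \<omega> < Y \<omega> + Yd \<omega>" for j
  proof -
    have "j = k \<longleftrightarrow> j < m \<and> \<not> Suc j < m"
      by (auto simp: m)
    then show ?thesis
      using less_m[of j] less_m[of "Suc j"] elim by (auto simp: timely_detection_def m not_less)
  qed
  moreover have "\<omega> \<in> space M - failure_before_detection \<longleftrightarrow> D m \<omega> < Y \<omega> + Yd \<omega>"
    using elim by (auto simp: failure_before_detection_def m_def not_le)
  ultimately show ?case
    by auto
qed

lemma sums_prob_timely_detection: "(\<lambda>k. prob (timely_detection k)) sums (1 - prob failure_before_detection)"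
proof -
  have "(\<lambda>k. prob (timely_detection k)) sums prob (\<Union>k. timely_detection k)"
    by (rule finite_measure_UNION[OF _ disjoint_timely_detection]) auto
  also have "prob (\<Union>k. timely_detection k) = prob (space M - failure_before_detection)"
    by (rule measure_eq_AE[OF AE_timely_detection_iff[THEN AE_mp, OF AE_I2], symmetric]) auto
  also have "\<dots> = 1 - prob failure_before_detection"
    by (rule prob_compl) simp
  finally show ?thesis .
qed

lemma moment_Suc_sums: "(\<lambda>k. moment i mu (Suc k)) sums (moment_sum i mu - 0 ^ i)"
  using moment_sums[OF mu_pos, of i] by (subst sums_Suc_iff) (simp add: moment_at_0)

lemma prob_no_failure_before_detection_distinct_rates:
  assumes "lam \<noteq> mu"
  shows "1 - prob failure_before_detection =
    mu ^ n / (mu - lam) ^ n * (laplace lam - (1 - laplace lam) *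
      (\<Sum>i<n. (mu - lam) ^ i / fact i * (-1) ^ i * (deriv ^^ i) (\<lambda>s. laplace s / (1 - laplace s)) mu))"
proof -
  define a where "a i = (mu - lam) ^ i / fact i" for i
  define H where "H i = moment_sum i mu" for i
  have "(\<lambda>k. prob (timely_detection k)) sums
      (mu ^ n / (mu - lam) ^ n * (\<Sum>i<n. a i * (laplace lam * H i - (H i - 0 ^ i))))"
    unfolding prob_timely_detection if_P[OF assms] a_def H_def
    by (intro sums_mult sums_sum sums_diff moment_sums mu_pos moment_Suc_sums)
  then have "1 - prob failure_before_detection
      = mu ^ n / (mu - lam) ^ n * (\<Sum>i<n. a i * (laplace lam * H i - (H i - 0 ^ i)))"
    using sums_prob_timely_detection sums_unique2 by blast
  also have "(\<Sum>i<n. a i * (laplace lam * H i - (H i - 0 ^ i)))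
      = laplace lam * (\<Sum>i<n. a i * 0 ^ i) - (1 - laplace lam) * (\<Sum>i<n. a i * (H i - 0 ^ i))"
    unfolding sum_distrib_left sum_subtractf[symmetric] by (intro sum.cong refl) (simp add: algebra_simps)
  also have "(\<Sum>i<n. a i * 0 ^ i) = 1"
    using sum_lessThan_mult_zero_power[OF n_pos, of a] by (simp add: a_def)
  also have "(\<Sum>i<n. a i * (H i - 0 ^ i))
      = (\<Sum>i<n. (mu - lam) ^ i / fact i * (-1) ^ i * (deriv ^^ i) (\<lambda>s. laplace s / (1 - laplace s)) mu)"
    by (simp add: a_def H_def higher_deriv_laplace_ratio[OF mu_pos] mult.assoc)
  finally show ?thesis
    by simp
qed

lemma prob_no_failure_before_detection_equal_rates:
  assumes "lam = mu"
  shows "1 - prob failure_before_detection =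
    (1 - laplace mu) * mu ^ n / fact n * (-1) ^ n * (deriv ^^ n) (\<lambda>s. laplace s / (1 - laplace s)) mu"
proof -
  have "(\<lambda>k. prob (timely_detection k)) sums
      (mu ^ n / fact n * ((moment_sum n mu - 0 ^ n) - laplace mu * moment_sum n mu))"
    unfolding prob_timely_detection if_not_P[OF not_not[THEN iffD2, OF assms]]
    by (intro sums_mult sums_diff moment_sums mu_pos moment_Suc_sums)
  then have "1 - prob failure_before_detection
      = mu ^ n / fact n * ((moment_sum n mu - 0 ^ n) - laplace mu * moment_sum n mu)"
    using sums_prob_timely_detection sums_unique2 by blast
  also have "\<dots> = (1 - laplace mu) * mu ^ n / fact n * ((-1) ^ n * (deriv ^^ n) (\<lambda>s. laplace s / (1 - laplace s)) mu)"
    using n_pos by (simp add: higher_deriv_laplace_ratio[OF mu_pos] zero_power field_simps)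
  finally show ?thesis
    by (simp add: mult.assoc)
qed

theorem prob_no_failure_before_detection:
  "1 - prob failure_before_detection = (if lam \<noteq> mu then
      mu ^ n / (mu - lam) ^ n * (laplace lam - (1 - laplace lam) *
        (\<Sum>i<n. (mu - lam) ^ i / fact i * (-1) ^ i * (deriv ^^ i) (\<lambda>s. laplace s / (1 - laplace s)) mu))
    else (1 - laplace mu) * mu ^ n / fact n * (-1) ^ n * (deriv ^^ n) (\<lambda>s. laplace s / (1 - laplace s)) mu)"
  using prob_no_failure_before_detection_distinct_rates prob_no_failure_before_detection_equal_rates
  by simp

end

section \<open>Almost surely positive inspection intervals\<close>

text \<open>
  The intervals \<open>C i\<close> are positive only almost surely. Replacing their other values by \<open>1\<close>
  gives intervals satisfying the assumptions of \<open>inspection_model\<close> everywhere, and changes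
  neither the inspection times nor \<open>Bbar\<close> outside a null set.
\<close>

definition positive_part_or_one :: "(nat \<Rightarrow> 'a \<Rightarrow> real) \<Rightarrow> nat \<Rightarrow> 'a \<Rightarrow> real" where
  "positive_part_or_one C i \<omega> = (if 1 \<le> i \<and> 0 < C i \<omega> then C i \<omega> else 1)"

lemma AE_positive_part_or_one_eq:
  assumes "prob_space M"
    and C_measurable: "\<And>i. 1 \<le> i \<Longrightarrow> C i \<in> borel_measurable M"
    and C_distr: "\<And>i. 1 \<le> i \<Longrightarrow> distr M borel (C i) = distr M borel (C 1)"
    and C_pos: "prob_space.prob M {\<omega> \<in> space M. 0 < C 1 \<omega>} = 1"
  shows "AE \<omega> in M. \<forall>i\<ge>1. positive_part_or_one C i \<omega> = C i \<omega>"
proof -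
  interpret prob_space M by fact
  have "prob {\<omega> \<in> space M. 0 < C i \<omega>} = 1" if "1 \<le> i" for i
  proof -
    have "prob {\<omega> \<in> space M. 0 < C i \<omega>} = measure (distr M borel (C i)) {0<..}"
      using C_measurable[OF that] by (subst measure_distr) (auto simp: vimage_def Int_def conj_commute)
    also have "\<dots> = prob {\<omega> \<in> space M. 0 < C 1 \<omega>}"
      using C_measurable[of 1] by (subst C_distr[OF that], subst measure_distr) (auto simp: vimage_def Int_def conj_commute)
    finally show ?thesis
      using C_pos by simp
  qed
  then have "AE \<omega> in M. 0 < C i \<omega>" if "1 \<le> i" for i
    using that C_measurable[OF that] prob_eq_1[of "{\<omega> \<in> space M. 0 < C i \<omega>}"] by simp
  then show ?thesis
    by (subst AE_all_countable) (auto simp: positive_part_or_one_def elim!: eventually_mono)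
qed

lemma inspection_model_positive_part_or_one:
  assumes "prob_space M" "1 \<le> n" "0 < mu" "0 < lam"
    and "distributed M lborel Y (erlang_density (n - 1) mu)"
    and "distributed M lborel Yd (exponential_density lam)"
    and C_measurable: "\<And>i. 1 \<le> i \<Longrightarrow> C i \<in> borel_measurable M"
    and C_distr: "\<And>i. 1 \<le> i \<Longrightarrow> distr M borel (C i) = distr M borel (C 1)"
    and indep: "prob_space.indep_vars M (\<lambda>_. borel)
           (\<lambda>j. case j of Inl b \<Rightarrow> (if b then Y else Yd) | Inr i \<Rightarrow> C i) (range Inl \<union> Inr ` {1..})"
  shows "inspection_model M n mu lam Y Yd (positive_part_or_one C)"
proof -
  interpret prob_space M by fact
  define g :: "real \<Rightarrow> real" where "g x = (if 0 < x then x else 1)" for x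
  have g[measurable]: "g \<in> borel_measurable borel"
    unfolding g_def by measurable
  have C': "positive_part_or_one C i = (if 1 \<le> i then g \<circ> C i else (\<lambda>_. 1))" for i
    by (auto simp: positive_part_or_one_def g_def fun_eq_iff)
  show ?thesis
  proof (unfold_locales)
    show "positive_part_or_one C i \<in> borel_measurable M" for i
      using C_measurable by (simp add: C' measurable_comp)
    show "0 < positive_part_or_one C i \<omega>" for i \<omega>
      by (simp add: positive_part_or_one_def)
    have "distr M borel (g \<circ> C i) = distr (distr M borel (C i)) borel g" if "1 \<le> i" for i
      using C_measurable[OF that] by (simp add: distr_distr)
    then show "distr M borel (positive_part_or_one C i) = distr M borel (positive_part_or_one C 1)" if "1 \<le> i" for i
      using that C_distr[OF that] by (simp add: C')
    have "indep_vars (\<lambda>_. borel) (\<lambda>j \<omega>. (case j of Inl b \<Rightarrow> id | Inr i \<Rightarrow> g)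
        ((\<lambda>j. case j of Inl b \<Rightarrow> (if b then Y else Yd) | Inr i \<Rightarrow> C i) j \<omega>)) (range Inl \<union> Inr ` {1..})"
      by (rule indep_vars_compose2[OF indep]) (auto split: sum.split)
    then show "indep_vars (\<lambda>_. borel)
        (\<lambda>j. case j of Inl b \<Rightarrow> (if b then Y else Yd) | Inr i \<Rightarrow> positive_part_or_one C i) (range Inl \<union> Inr ` {1..})"
      by (rule indep_vars_cong[THEN iffD1, rotated 3]) (auto simp: C' fun_eq_iff)
  qed (use assms(1-6) in auto)
qed

theorem mainTheorem6:
  fixes M :: "'a measure"
    and n :: nat and mu lam :: real
    and Ys Yd :: "'a \<Rightarrow> real"
    and C :: "nat \<Rightarrow> 'a \<Rightarrow> real"
    and L :: "real \<Rightarrow> real"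
  assumes "prob_space M"
    and "n \<ge> 1" and "mu > 0" and "lam > 0"
    and "distributed M lborel Ys (erlang_density (n - 1) mu)"
    and "distributed M lborel Yd (exponential_density lam)"
    and "\<And>i. i \<ge> 1 \<Longrightarrow> C i \<in> borel_measurable M"
    and "\<And>i. i \<ge> 1 \<Longrightarrow> distr M borel (C i) = distr M borel (C 1)"
    and "prob_space.prob M {\<omega> \<in> space M. C 1 \<omega> > 0} = 1"
    and "integrable M (\<lambda>\<omega>. (C 1 \<omega>)\<^sup>2)"
    and "prob_space.indep_vars M (\<lambda>_. borel)
           (\<lambda>j. case j of Inl b \<Rightarrow> (if b then Ys else Yd) | Inr i \<Rightarrow> C i)
           (range Inl \<union> Inr ` {1..})"
    and L_def: "\<And>s. L s = prob_space.expectation M (\<lambda>\<omega>. exp (- s * C 1 \<omega>))"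
  shows "(\<integral>\<^sup>+ \<omega>. ennreal (real (Bbar C (Ys \<omega>) \<omega>)) \<partial>M)
           = ennreal (\<Sum>i<n. mu ^ i / fact i * (-1) ^ i * (deriv ^^ i) (\<lambda>s. 1 / (1 - L s)) mu)
         \<and> 1 - prob_space.prob M {\<omega> \<in> space M.
                insp_time C (Bbar C (Ys \<omega>) \<omega>) \<omega> \<ge> Ys \<omega> + Yd \<omega>}
           = (if lam \<noteq> mu then
              mu ^ n / (mu - lam) ^ n *
                (L lam - (1 - L lam) *
                  (\<Sum>i<n. (mu - lam) ^ i / fact i * (-1) ^ i
                           * (deriv ^^ i) (\<lambda>s. L s / (1 - L s)) mu))
            else (1 - L mu) * mu ^ n / fact n * (-1) ^ n
                   * (deriv ^^ n) (\<lambda>s. L s / (1 - L s)) mu)"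
proof -
  interpret prob_space M by fact
  interpret inspection_model M n mu lam Ys Yd "positive_part_or_one C"
    by (rule inspection_model_positive_part_or_one[of M n mu lam Ys Yd C, OF assms(1-8,11)])
  have AE_eq: "AE \<omega> in M. \<forall>i\<ge>1. positive_part_or_one C i \<omega> = C i \<omega>"
    by (rule AE_positive_part_or_one_eq[of M C, OF assms(1,7-9)])
  then have AE_insp: "AE \<omega> in M. (\<forall>k. insp_time C k \<omega> = D k \<omega>) \<and> (\<forall>t. Bbar C t \<omega> = Bbar (positive_part_or_one C) t \<omega>)"
    by eventually_elim (simp add: Bbar_def insp_time_def)
  have "L = laplace"
    using AE_eq assms(7)[of 1] by (auto simp: fun_eq_iff L_def laplace_def intro!: integral_cong_AE)
  moreover have "(\<integral>\<^sup>+\<omega>. ennreal (real (Bbar C (Ys \<omega>) \<omega>)) \<partial>M)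
      = (\<integral>\<^sup>+\<omega>. ennreal (real (Bbar (positive_part_or_one C) (Ys \<omega>) \<omega>)) \<partial>M)"
    using AE_insp by (intro nn_integral_cong_AE) auto
  moreover have "prob {\<omega> \<in> space M. insp_time C (Bbar C (Ys \<omega>) \<omega>) \<omega> \<ge> Ys \<omega> + Yd \<omega>} = prob failure_before_detection"
  proof (rule measure_eq_AE)
    show "AE \<omega> in M. \<omega> \<in> {\<omega> \<in> space M. insp_time C (Bbar C (Ys \<omega>) \<omega>) \<omega> \<ge> Ys \<omega> + Yd \<omega>}
        \<longleftrightarrow> \<omega> \<in> failure_before_detection"
      using AE_insp by eventually_elim (simp add: failure_before_detection_def)
    show "{\<omega> \<in> space M. insp_time C (Bbar C (Ys \<omega>) \<omega>) \<omega> \<ge> Ys \<omega> + Yd \<omega>} \<in> events"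
      using measurable_insp_time_Bbar(2)[of C M, OF assms(7) Y_measurable] by measurable
  qed simp
  ultimately show ?thesis
    using expected_inspections prob_no_failure_before_detection by simp
qed

end
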